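(* Let $\Gamma$ be a group and $S$ a $\Gamma$-graded semigroup with local units. The following are equivalent: (1) $S$ is strongly graded; (2) $S_\alpha S_{\alpha^{-1}}=S_\varepsilon$ for every $\alpha\in\Gamma$; (3) $S_\alpha S_{\alpha^{-1}}$ contains all the local units of $S$ for every $\alpha\in\Gamma$. Moreover, if $S$ is an inverse semigroup, these are also equivalent to each of: (4) $E(S)=\{ss^{-1}:s\in S_\alpha\}$ for every $\alpha$; (5) $E(S)=\{s^{-1}s:s\in S_\alpha\}$ for every $\alpha$; (6) for all $u\in E(S)$ and $\alpha\in\Gamma$ there is $s\in S_\alpha$ with $u\,\mathscr L\,s$; (7) for all $u\in E(S)$ and $\alpha\in\Gamma$ there is $s\in S_\alpha$ with $u\,\mathscr R\,s$.
   Context: Semigroups have a zero; $S$ is $\Gamma$-graded via $\deg:S\setminus\{0\}\to\Gamma$ with $\deg(st)=\deg(s)\deg(t)$ whenever $st\neq0$; $S_\alpha=\deg^{-1}(\alpha)\cup\{0\}$, $\varepsilon$ the identity of $\Gamma$, and $S_\alpha S_\beta=\{st:s\in S_\alpha,t\in S_\beta\}$. $S$ is strongly graded if $S_\alpha S_\beta=S_{\alpha\beta}$ for all $\alpha,\beta$. $E(S)$ is the set of idempotents. $S$ has local units if for each $s$ there are $u,v\in E(S)$ with $us=s=sv$; such idempotents are called local units. Green's relations: $s\,\mathscr L\,t$ iff $S^1s=S^1t$ and $s\,\mathscr R\,t$ iff $sS^1=tS^1$, where $S^1$ is $S$ with an identity adjoined. *)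

theory Defs
  imports "HOL-Algebra.Group"
begin

text \<open>A semigroup with zero is modelled as a type of class semigroup_mult and mult_zero
  (the whole type is the semigroup S; 0 is its zero).\<close>

definition gr_comp :: "('g, 'b) monoid_scheme \<Rightarrow> ('a::{semigroup_mult,mult_zero} \<Rightarrow> 'g) \<Rightarrow> 'g \<Rightarrow> 'a set"
  where "gr_comp G deg \<alpha> = {s. s \<noteq> 0 \<and> deg s = \<alpha>} \<union> {0}"

definition graded :: "('g, 'b) monoid_scheme \<Rightarrow> ('a::{semigroup_mult,mult_zero} \<Rightarrow> 'g) \<Rightarrow> bool"
  where "graded G deg \<longleftrightarrow>
     (\<forall>s. s \<noteq> 0 \<longrightarrow> deg s \<in> carrier G) \<and>
     (\<forall>s t. s * t \<noteq> 0 \<longrightarrow> deg (s * t) = deg s \<otimes>\<^bsub>G\<^esub> deg t)"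

definition set_mult :: "'a::times set \<Rightarrow> 'a set \<Rightarrow> 'a set"
  where "set_mult A B = {s * t | s t. s \<in> A \<and> t \<in> B}"

definition strongly_graded :: "('g, 'b) monoid_scheme \<Rightarrow> ('a::{semigroup_mult,mult_zero} \<Rightarrow> 'g) \<Rightarrow> bool"
  where "strongly_graded G deg \<longleftrightarrow>
     (\<forall>\<alpha>\<in>carrier G. \<forall>\<beta>\<in>carrier G.
        set_mult (gr_comp G deg \<alpha>) (gr_comp G deg \<beta>) = gr_comp G deg (\<alpha> \<otimes>\<^bsub>G\<^esub> \<beta>))"

definition idempotents :: "'a::semigroup_mult set"
  where "idempotents = {e. e * e = e}"

definition has_local_units :: "'a::semigroup_mult itself \<Rightarrow> bool"
  where "has_local_units _ \<longleftrightarrow>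
     (\<forall>s::'a. \<exists>u v. u \<in> idempotents \<and> v \<in> idempotents \<and> u * s = s \<and> s * v = s)"

definition local_units :: "'a::semigroup_mult set"
  where "local_units = {u. u \<in> idempotents \<and> (\<exists>s. u * s = s \<or> s * u = s)}"

definition inverse_semigroup :: "'a::semigroup_mult itself \<Rightarrow> bool"
  where "inverse_semigroup _ \<longleftrightarrow> (\<forall>s::'a. \<exists>!t. s * t * s = s \<and> t * s * t = t)"

definition sinv :: "'a::semigroup_mult \<Rightarrow> 'a"
  where "sinv s = (THE t. s * t * s = s \<and> t * s * t = t)"

text \<open>Green's relations via S^1 s = insert s (S s).\<close>
definition green_L :: "'a::semigroup_mult \<Rightarrow> 'a \<Rightarrow> bool"
  where "green_L s t \<longleftrightarrow> insert s (range (\<lambda>x. x * s)) = insert t (range (\<lambda>x. x * t))"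

definition green_R :: "'a::semigroup_mult \<Rightarrow> 'a \<Rightarrow> bool"
  where "green_R s t \<longleftrightarrow> insert s (range (\<lambda>x. s * x)) = insert t (range (\<lambda>x. t * x))"

end

theory Submission
  imports Defs
begin

text \<open>Idempotents have degree \<open>\<epsilon>\<close>. If every idempotent factors as \<open>xy\<close> with \<open>x \<in> S\<^sub>\<alpha>\<close> and
  \<open>y \<in> S\<^bsub>\<alpha>\<inverse>\<^esub>\<close>, then factoring a left local unit \<open>u\<close> of \<open>s \<in> S\<^bsub>\<alpha>\<beta>\<^esub>\<close> in this way gives
  \<open>s = us = x(ys) \<in> S\<^sub>\<alpha>S\<^sub>\<beta>\<close>; so (3) implies (1), and the other implications among (1)--(3)
  are immediate. In an inverse semigroup an idempotent \<open>e = ab\<close> with \<open>a \<in> S\<^sub>\<alpha>\<close> equals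
  \<open>(ea)(ea)\<inverse>\<close>, which gives (4); inversion maps \<open>S\<^sub>\<alpha>\<close> onto \<open>S\<^bsub>\<alpha>\<inverse>\<^esub>\<close> and turns (4) into (5);
  \<open>s\<inverse>s \<L> s\<close> and \<open>ss\<inverse> \<R> s\<close> give (6) and (7); and \<open>u \<L> s\<close> forces \<open>u = (us\<inverse>)s\<close>, which leads
  back to (3).\<close>

section \<open>Graded semigroups\<close>

lemma local_units_eq_idempotents: "local_units = idempotents"
  unfolding local_units_def idempotents_def by auto

lemma mem_gr_comp_iff: "s \<in> gr_comp G deg \<alpha> \<longleftrightarrow> s = 0 \<or> deg s = \<alpha>"
  unfolding gr_comp_def by auto

lemma zero_mem_gr_comp: "0 \<in> gr_comp G deg \<alpha>"
  by (simp add: mem_gr_comp_iff)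

lemma mult_mem_gr_comp:
  assumes "graded G deg" "s \<in> gr_comp G deg \<alpha>" "t \<in> gr_comp G deg \<beta>"
  shows "s * t \<in> gr_comp G deg (\<alpha> \<otimes>\<^bsub>G\<^esub> \<beta>)"
  using assms by (cases "s * t = 0") (auto simp: mem_gr_comp_iff graded_def)

lemma set_mult_gr_comp_subset:
  assumes "graded G deg"
  shows "set_mult (gr_comp G deg \<alpha>) (gr_comp G deg \<beta>) \<subseteq> gr_comp G deg (\<alpha> \<otimes>\<^bsub>G\<^esub> \<beta>)"
  using mult_mem_gr_comp[OF assms] by (auto simp: set_mult_def)

section \<open>Inverse semigroups and Green's relations\<close>

lemma sinv_spec:
  assumes "inverse_semigroup TYPE('a::semigroup_mult)"
  shows "(s::'a) * sinv s * s = s \<and> sinv s * s * sinv s = sinv s"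
proof -
  have "\<exists>!t. s * t * s = s \<and> t * s * t = t"
    using assms by (simp add: inverse_semigroup_def)
  then show ?thesis
    unfolding sinv_def by (rule theI')
qed

lemma mult_sinv_mult:
  "inverse_semigroup TYPE('a::semigroup_mult) \<Longrightarrow> (s::'a) * sinv s * s = s"
  using sinv_spec by blast

lemma sinv_mult_sinv:
  "inverse_semigroup TYPE('a::semigroup_mult) \<Longrightarrow> sinv (s::'a) * s * sinv s = sinv s"
  using sinv_spec by blast

lemma sinv_eqI:
  assumes "inverse_semigroup TYPE('a::semigroup_mult)" "(s::'a) * t * s = s" "t * s * t = t"
  shows "sinv s = t"
proof -
  have "\<exists>!t. s * t * s = s \<and> t * s * t = t"
    using assms(1) by (simp add: inverse_semigroup_def)
  then show ?thesis
    unfolding sinv_def by (rule the1_equality) (use assms(2,3) in blast)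
qed

lemma sinv_sinv:
  "inverse_semigroup TYPE('a::semigroup_mult) \<Longrightarrow> sinv (sinv (s::'a)) = s"
  by (rule sinv_eqI) (simp_all add: mult_sinv_mult sinv_mult_sinv)

lemma mult_sinv_mem_idempotents:
  assumes "inverse_semigroup TYPE('a::semigroup_mult)"
  shows "(s::'a) * sinv s \<in> idempotents"
proof -
  have "s * sinv s * (s * sinv s) = (s * sinv s * s) * sinv s"
    by (simp add: mult.assoc)
  then show ?thesis
    using mult_sinv_mult[OF assms] by (simp add: idempotents_def)
qed

text \<open>From \<open>e = ab\<close> follows \<open>aa\<inverse>e = e\<close>, and then \<open>(ea)\<inverse> = a\<inverse>e\<close>.\<close>
lemma idempotent_eq_mult_sinv:
  assumes inv: "inverse_semigroup TYPE('a::semigroup_mult)"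
    and idem: "e * e = e" and factor: "(e::'a) = a * b"
  shows "e * a * sinv (e * a) = e"
proof -
  have absorb: "a * sinv a * e = e"
    using factor mult_sinv_mult[OF inv] by (metis mult.assoc)
  have "e * a * (sinv a * e) * (e * a) = e * (a * sinv a * e) * e * a"
    by (simp add: mult.assoc)
  then have "e * a * (sinv a * e) * (e * a) = e * a"
    using absorb idem by simp
  moreover have "sinv a * e * (e * a) * (sinv a * e) = sinv a * (e * e) * (a * sinv a * e)"
    by (simp add: mult.assoc)
  then have "sinv a * e * (e * a) * (sinv a * e) = sinv a * e"
    using absorb idem by (simp add: mult.assoc)
  ultimately have "sinv (e * a) = sinv a * e"
    by (rule sinv_eqI[OF inv])
  moreover have "e * a * (sinv a * e) = e * (a * sinv a * e)"
    by (simp add: mult.assoc)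
  ultimately show ?thesis
    using absorb idem by simp
qed

lemma principal_left_ideal_mono:
  "(s::'a::semigroup_mult) \<in> insert t (range (\<lambda>x. x * t))
    \<Longrightarrow> insert s (range (\<lambda>x. x * s)) \<subseteq> insert t (range (\<lambda>x. x * t))"
  by (auto simp: mult.assoc[symmetric])

lemma principal_right_ideal_mono:
  "(s::'a::semigroup_mult) \<in> insert t (range (\<lambda>x. t * x))
    \<Longrightarrow> insert s (range (\<lambda>x. s * x)) \<subseteq> insert t (range (\<lambda>x. t * x))"
  by (auto simp: mult.assoc)

lemma green_L_iff:
  "green_L s t \<longleftrightarrow> s \<in> insert t (range (\<lambda>x. x * t)) \<and> t \<in> insert s (range (\<lambda>x. x * s))"
  unfolding green_L_def using principal_left_ideal_mono by blast

lemma green_R_iff: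
  "green_R s t \<longleftrightarrow> s \<in> insert t (range (\<lambda>x. t * x)) \<and> t \<in> insert s (range (\<lambda>x. s * x))"
  unfolding green_R_def using principal_right_ideal_mono by blast

lemma green_L_sinv_mult:
  assumes "inverse_semigroup TYPE('a::semigroup_mult)"
  shows "green_L (sinv s * s) (s::'a)"
proof -
  have "s = s * sinv s * s"
    using mult_sinv_mult[OF assms] by simp
  then have "s \<in> range (\<lambda>x. x * (sinv s * s))"
    by (metis mult.assoc rangeI)
  then show ?thesis
    unfolding green_L_iff by blast
qed

lemma green_R_mult_sinv:
  assumes "inverse_semigroup TYPE('a::semigroup_mult)"
  shows "green_R (s * sinv s) (s::'a)"
proof -
  have "s = s * sinv s * s"
    using mult_sinv_mult[OF assms] by simp
  then have "s \<in> range (\<lambda>x. (s * sinv s) * x)"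
    by blast
  then show ?thesis
    unfolding green_R_iff by (metis insertCI rangeI)
qed

lemma mult_sinv_mult_if_green_L:
  assumes "inverse_semigroup TYPE('a::semigroup_mult)" "green_L u (s::'a)"
  shows "u * sinv s * s = u"
  using assms(2) mult_sinv_mult[OF assms(1)] unfolding green_L_iff by (auto simp: mult.assoc)

lemma mult_sinv_mult_if_green_R:
  assumes "inverse_semigroup TYPE('a::semigroup_mult)" "green_R u (s::'a)"
  shows "s * (sinv s * u) = u"
  using assms(2) mult_sinv_mult[OF assms(1)] unfolding green_R_iff
  by (auto simp: mult.assoc[symmetric])

section \<open>Strong gradings\<close>

context group
begin

lemma idempotent_mem_gr_comp_one:
  assumes "graded G deg" "e * e = e"
  shows "e \<in> gr_comp G deg \<one>"
proof (cases "e = 0")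
  case False
  then have "deg e \<in> carrier G" "deg e = deg e \<otimes> deg e"
    using assms unfolding graded_def by metis+
  then show ?thesis by (simp add: mem_gr_comp_iff)
qed (simp add: zero_mem_gr_comp)

lemma idempotents_subset_gr_comp_one:
  assumes "graded G deg"
  shows "idempotents \<subseteq> gr_comp G deg \<one>"
  using idempotent_mem_gr_comp_one[OF assms] by (auto simp: idempotents_def)

lemma strongly_graded_set_mult_inv:
  assumes "strongly_graded G deg" "\<alpha> \<in> carrier G"
  shows "set_mult (gr_comp G deg \<alpha>) (gr_comp G deg (inv \<alpha>)) = gr_comp G deg \<one>"
  using assms by (metis strongly_graded_def inv_closed r_inv)

lemma strongly_graded_if_idempotents_factor:
  assumes "graded G deg" "has_local_units TYPE('s::{semigroup_mult,mult_zero})"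
    and factor: "\<forall>\<alpha>\<in>carrier G. (idempotents :: 's set)
                  \<subseteq> set_mult (gr_comp G deg \<alpha>) (gr_comp G deg (inv \<alpha>))"
  shows "strongly_graded G (deg :: 's \<Rightarrow> 'a)"
  unfolding strongly_graded_def
proof (intro ballI equalityI subsetI)
  fix \<alpha> \<beta> s
  assume \<alpha>: "\<alpha> \<in> carrier G" and \<beta>: "\<beta> \<in> carrier G" and s: "s \<in> gr_comp G deg (\<alpha> \<otimes> \<beta>)"
  obtain u where "u \<in> idempotents" and us: "u * s = s"
    using assms(2) unfolding has_local_units_def by blast
  then obtain x y where u: "u = x * y"
    and x: "x \<in> gr_comp G deg \<alpha>" and y: "y \<in> gr_comp G deg (inv \<alpha>)"
    using factor \<alpha> unfolding set_mult_def by blast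
  have "y * s \<in> gr_comp G deg (inv \<alpha> \<otimes> (\<alpha> \<otimes> \<beta>))"
    using mult_mem_gr_comp[OF assms(1) y s] .
  also have "inv \<alpha> \<otimes> (\<alpha> \<otimes> \<beta>) = \<beta>"
    using \<alpha> \<beta> by (simp add: inv_solve_left')
  finally have "y * s \<in> gr_comp G deg \<beta>" .
  moreover have "s = x * (y * s)"
    using us u by (simp add: mult.assoc)
  ultimately show "s \<in> set_mult (gr_comp G deg \<alpha>) (gr_comp G deg \<beta>)"
    using x unfolding set_mult_def by blast
qed (use set_mult_gr_comp_subset[OF assms(1)] in blast)

lemma strongly_graded_iff_idempotents_factor:
  assumes "graded G deg" "has_local_units TYPE('s::{semigroup_mult,mult_zero})"
  shows "strongly_graded G (deg :: 's \<Rightarrow> 'a) \<longleftrightarrow>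
           (\<forall>\<alpha>\<in>carrier G. (idempotents :: 's set)
              \<subseteq> set_mult (gr_comp G deg \<alpha>) (gr_comp G deg (inv \<alpha>)))"
  using strongly_graded_if_idempotents_factor[OF assms] strongly_graded_set_mult_inv
    idempotents_subset_gr_comp_one[OF assms(1)] by blast

lemma strongly_graded_iff_set_mult_inv:
  assumes "graded G deg" "has_local_units TYPE('s::{semigroup_mult,mult_zero})"
  shows "strongly_graded G (deg :: 's \<Rightarrow> 'a) \<longleftrightarrow>
           (\<forall>\<alpha>\<in>carrier G. set_mult (gr_comp G deg \<alpha>) (gr_comp G deg (inv \<alpha>)) = gr_comp G deg \<one>)"
  using strongly_graded_iff_idempotents_factor[OF assms] strongly_graded_set_mult_inv
    idempotents_subset_gr_comp_one[OF assms(1)] by blast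

lemma sinv_mem_gr_comp_inv:
  assumes graded: "graded G deg" and inv: "inverse_semigroup TYPE('s::{semigroup_mult,mult_zero})"
    and s: "(s::'s) \<in> gr_comp G deg \<alpha>" and \<alpha>: "\<alpha> \<in> carrier G"
  shows "sinv s \<in> gr_comp G deg (inv \<alpha>)"
proof (cases "sinv s = 0")
  case False
  have "s * sinv s \<noteq> 0"
    using False sinv_mult_sinv[OF inv, of s] by (metis mult.assoc mult_zero_right)
  moreover have "s * sinv s \<in> gr_comp G deg \<one>"
    using idempotent_mem_gr_comp_one[OF graded] mult_sinv_mem_idempotents[OF inv]
    by (simp add: idempotents_def)
  ultimately have "deg s \<otimes> deg (sinv s) = \<one>" and "deg s = \<alpha>"
    using graded s by (auto simp: graded_def mem_gr_comp_iff)
  moreover have "deg (sinv s) \<in> carrier G"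
    using graded False by (simp add: graded_def)
  ultimately have "inv \<alpha> = deg (sinv s)"
    using \<alpha> by (metis inv_comm inv_equality)
  then show ?thesis
    by (simp add: mem_gr_comp_iff)
qed (simp add: zero_mem_gr_comp)

lemma sinv_mult_set_eq_mult_sinv_set:
  assumes "graded G deg" "inverse_semigroup TYPE('s::{semigroup_mult,mult_zero})"
    and \<alpha>: "\<alpha> \<in> carrier G"
  shows "{sinv s * s | s. s \<in> gr_comp G (deg :: 's \<Rightarrow> 'a) \<alpha>}
           = {s * sinv s | s. s \<in> gr_comp G deg (inv \<alpha>)}"
proof (intro equalityI subsetI)
  fix x assume "x \<in> {sinv s * s | s. s \<in> gr_comp G deg \<alpha>}"
  then obtain s where x: "x = sinv s * s" and s: "s \<in> gr_comp G deg \<alpha>"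
    by blast
  have "sinv s \<in> gr_comp G deg (inv \<alpha>)"
    using sinv_mem_gr_comp_inv[OF assms(1,2) s \<alpha>] .
  moreover have "x = sinv s * sinv (sinv s)"
    using x sinv_sinv[OF assms(2)] by simp
  ultimately show "x \<in> {s * sinv s | s. s \<in> gr_comp G deg (inv \<alpha>)}"
    by blast
next
  fix x assume "x \<in> {s * sinv s | s. s \<in> gr_comp G deg (inv \<alpha>)}"
  then obtain s where x: "x = s * sinv s" and s: "s \<in> gr_comp G deg (inv \<alpha>)"
    by blast
  have "sinv s \<in> gr_comp G deg \<alpha>"
    using sinv_mem_gr_comp_inv[OF assms(1,2) s] \<alpha> by simp
  moreover have "x = sinv (sinv s) * sinv s"
    using x sinv_sinv[OF assms(2)] by simp
  ultimately show "x \<in> {sinv s * s | s. s \<in> gr_comp G deg \<alpha>}"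
    by blast
qed

lemma idempotents_eq_mult_sinv_iff_sinv_mult:
  assumes "graded G deg" "inverse_semigroup TYPE('s::{semigroup_mult,mult_zero})"
  shows "(\<forall>\<alpha>\<in>carrier G. (idempotents :: 's set) = {s * sinv s | s. s \<in> gr_comp G deg \<alpha>})
           \<longleftrightarrow> (\<forall>\<alpha>\<in>carrier G. (idempotents :: 's set) = {sinv s * s | s. s \<in> gr_comp G deg \<alpha>})"
proof (intro iffI ballI)
  fix \<alpha> assume \<alpha>: "\<alpha> \<in> carrier G"
    and right: "\<forall>\<beta>\<in>carrier G. (idempotents :: 's set) = {s * sinv s | s. s \<in> gr_comp G deg \<beta>}"
  then show "(idempotents :: 's set) = {sinv s * s | s. s \<in> gr_comp G deg \<alpha>}"
    using sinv_mult_set_eq_mult_sinv_set[OF assms \<alpha>] by simp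
next
  fix \<alpha> assume \<alpha>: "\<alpha> \<in> carrier G"
    and left: "\<forall>\<beta>\<in>carrier G. (idempotents :: 's set) = {sinv s * s | s. s \<in> gr_comp G deg \<beta>}"
  then have "(idempotents :: 's set) = {sinv s * s | s. s \<in> gr_comp G deg (inv \<alpha>)}"
    by simp
  also have "\<dots> = {s * sinv s | s. s \<in> gr_comp G deg \<alpha>}"
    using sinv_mult_set_eq_mult_sinv_set[OF assms inv_closed[OF \<alpha>]] \<alpha> by simp
  finally show "(idempotents :: 's set) = {s * sinv s | s. s \<in> gr_comp G deg \<alpha>}" .
qed

lemma strongly_graded_idempotents_eq_mult_sinv:
  assumes graded: "graded G deg" and sg: "strongly_graded G deg"
    and inv: "inverse_semigroup TYPE('s::{semigroup_mult,mult_zero})" and \<alpha>: "\<alpha> \<in> carrier G"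
  shows "(idempotents :: 's set) = {s * sinv s | s. s \<in> gr_comp G deg \<alpha>}"
proof (intro equalityI subsetI)
  fix e :: 's assume "e \<in> idempotents"
  then have idem: "e * e = e" and "e \<in> gr_comp G deg \<one>"
    using idempotent_mem_gr_comp_one[OF graded] by (auto simp: idempotents_def)
  then obtain a b where "e = a * b" and a: "a \<in> gr_comp G deg \<alpha>"
    using strongly_graded_set_mult_inv[OF sg \<alpha>] unfolding set_mult_def by blast
  then have "e = e * a * sinv (e * a)"
    using idempotent_eq_mult_sinv[OF inv idem] by simp
  moreover have "e * a \<in> gr_comp G deg \<alpha>"
    using mult_mem_gr_comp[OF graded \<open>e \<in> gr_comp G deg \<one>\<close> a] \<alpha> by simp
  ultimately show "e \<in> {s * sinv s | s. s \<in> gr_comp G deg \<alpha>}"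
    by blast
qed (auto intro: mult_sinv_mem_idempotents[OF inv])

lemma idempotents_factor_if_green_L:
  assumes graded: "graded G deg" and inv: "inverse_semigroup TYPE('s::{semigroup_mult,mult_zero})"
    and green: "\<forall>u\<in>(idempotents :: 's set). \<forall>\<alpha>\<in>carrier G. \<exists>s\<in>gr_comp G deg \<alpha>. green_L u s"
  shows "\<forall>\<alpha>\<in>carrier G. (idempotents :: 's set)
           \<subseteq> set_mult (gr_comp G deg \<alpha>) (gr_comp G deg (inv \<alpha>))"
proof (intro ballI subsetI)
  fix \<alpha> u assume \<alpha>: "\<alpha> \<in> carrier G" and u: "u \<in> (idempotents :: 's set)"
  then obtain s where s: "s \<in> gr_comp G deg (inv \<alpha>)" and "green_L u s"
    using green by blast
  then have "u = u * sinv s * s"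
    using mult_sinv_mult_if_green_L[OF inv] by simp
  moreover have "u * sinv s \<in> gr_comp G deg (\<one> \<otimes> inv (inv \<alpha>))"
    using u idempotents_subset_gr_comp_one[OF graded] sinv_mem_gr_comp_inv[OF graded inv s] \<alpha>
    by (blast intro: mult_mem_gr_comp[OF graded])
  ultimately show "u \<in> set_mult (gr_comp G deg \<alpha>) (gr_comp G deg (inv \<alpha>))"
    using s \<alpha> unfolding set_mult_def by auto
qed

lemma idempotents_factor_if_green_R:
  assumes graded: "graded G deg" and inv: "inverse_semigroup TYPE('s::{semigroup_mult,mult_zero})"
    and green: "\<forall>u\<in>(idempotents :: 's set). \<forall>\<alpha>\<in>carrier G. \<exists>s\<in>gr_comp G deg \<alpha>. green_R u s"
  shows "\<forall>\<alpha>\<in>carrier G. (idempotents :: 's set)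
           \<subseteq> set_mult (gr_comp G deg \<alpha>) (gr_comp G deg (inv \<alpha>))"
proof (intro ballI subsetI)
  fix \<alpha> u assume \<alpha>: "\<alpha> \<in> carrier G" and u: "u \<in> (idempotents :: 's set)"
  then obtain s where s: "s \<in> gr_comp G deg \<alpha>" and "green_R u s"
    using green by blast
  then have "u = s * (sinv s * u)"
    using mult_sinv_mult_if_green_R[OF inv] by simp
  moreover have "sinv s * u \<in> gr_comp G deg (inv \<alpha> \<otimes> \<one>)"
    using u idempotents_subset_gr_comp_one[OF graded] sinv_mem_gr_comp_inv[OF graded inv s \<alpha>]
    by (blast intro: mult_mem_gr_comp[OF graded])
  ultimately show "u \<in> set_mult (gr_comp G deg \<alpha>) (gr_comp G deg (inv \<alpha>))"
    using s \<alpha> unfolding set_mult_def by auto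
qed

lemma strongly_graded_iff_inverse_semigroup_conditions:
  assumes graded: "graded G deg" and units: "has_local_units TYPE('s::{semigroup_mult,mult_zero})"
    and inv: "inverse_semigroup TYPE('s)"
  shows "(strongly_graded G (deg :: 's \<Rightarrow> 'a) \<longleftrightarrow>
            (\<forall>\<alpha>\<in>carrier G. (idempotents :: 's set) = {s * sinv s | s. s \<in> gr_comp G deg \<alpha>}))
       \<and> (strongly_graded G deg \<longleftrightarrow>
            (\<forall>\<alpha>\<in>carrier G. (idempotents :: 's set) = {sinv s * s | s. s \<in> gr_comp G deg \<alpha>}))
       \<and> (strongly_graded G deg \<longleftrightarrow>
            (\<forall>u\<in>(idempotents :: 's set). \<forall>\<alpha>\<in>carrier G. \<exists>s\<in>gr_comp G deg \<alpha>. green_L u s))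
       \<and> (strongly_graded G deg \<longleftrightarrow>
            (\<forall>u\<in>(idempotents :: 's set). \<forall>\<alpha>\<in>carrier G. \<exists>s\<in>gr_comp G deg \<alpha>. green_R u s))"
    (is "(?sg \<longleftrightarrow> ?range) \<and> (_ \<longleftrightarrow> ?domain) \<and> (_ \<longleftrightarrow> ?green_L) \<and> (_ \<longleftrightarrow> ?green_R)")
proof -
  note factor = strongly_graded_iff_idempotents_factor[OF graded units]
  have "?sg \<Longrightarrow> ?range"
    using strongly_graded_idempotents_eq_mult_sinv[OF graded _ inv] by blast
  moreover have "?range \<longleftrightarrow> ?domain"
    by (rule idempotents_eq_mult_sinv_iff_sinv_mult[OF graded inv])
  moreover have "?domain \<Longrightarrow> ?green_L"
  proof (intro ballI)
    fix u \<alpha> assume ?domain "u \<in> (idempotents :: 's set)" "\<alpha> \<in> carrier G"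
    then obtain s where "u = sinv s * s" "s \<in> gr_comp G deg \<alpha>"
      by blast
    then show "\<exists>s\<in>gr_comp G deg \<alpha>. green_L u s"
      using green_L_sinv_mult[OF inv] by blast
  qed
  moreover have "?range \<Longrightarrow> ?green_R"
  proof (intro ballI)
    fix u \<alpha> assume ?range "u \<in> (idempotents :: 's set)" "\<alpha> \<in> carrier G"
    then obtain s where "u = s * sinv s" "s \<in> gr_comp G deg \<alpha>"
      by blast
    then show "\<exists>s\<in>gr_comp G deg \<alpha>. green_R u s"
      using green_R_mult_sinv[OF inv] by blast
  qed
  moreover have "?green_L \<Longrightarrow> ?sg"
    using idempotents_factor_if_green_L[OF graded inv] factor by blast
  moreover have "?green_R \<Longrightarrow> ?sg"
    using idempotents_factor_if_green_R[OF graded inv] factor by blast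
  ultimately show ?thesis
    by argo
qed

end

theorem proposition2p12:
  fixes G :: "('g, 'b) monoid_scheme"
    and deg :: "'a::{semigroup_mult,mult_zero} \<Rightarrow> 'g"
  assumes "group G"
    and "graded G deg"
    and "has_local_units TYPE('a)"
  shows "(strongly_graded G deg \<longleftrightarrow>
            (\<forall>\<alpha>\<in>carrier G. set_mult (gr_comp G deg \<alpha>) (gr_comp G deg (inv\<^bsub>G\<^esub> \<alpha>))
                               = gr_comp G deg \<one>\<^bsub>G\<^esub>))
       \<and> (strongly_graded G deg \<longleftrightarrow>
            (\<forall>\<alpha>\<in>carrier G. (local_units :: 'a set)
                  \<subseteq> set_mult (gr_comp G deg \<alpha>) (gr_comp G deg (inv\<^bsub>G\<^esub> \<alpha>))))
       \<and> (inverse_semigroup TYPE('a) \<longrightarrow>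
            (strongly_graded G deg \<longleftrightarrow>
               (\<forall>\<alpha>\<in>carrier G. (idempotents :: 'a set) = {s * sinv s | s. s \<in> gr_comp G deg \<alpha>}))
          \<and> (strongly_graded G deg \<longleftrightarrow>
               (\<forall>\<alpha>\<in>carrier G. (idempotents :: 'a set) = {sinv s * s | s. s \<in> gr_comp G deg \<alpha>}))
          \<and> (strongly_graded G deg \<longleftrightarrow>
               (\<forall>u\<in>(idempotents :: 'a set). \<forall>\<alpha>\<in>carrier G. \<exists>s\<in>gr_comp G deg \<alpha>. green_L u s))
          \<and> (strongly_graded G deg \<longleftrightarrow>
               (\<forall>u\<in>(idempotents :: 'a set). \<forall>\<alpha>\<in>carrier G. \<exists>s\<in>gr_comp G deg \<alpha>. green_R u s)))"
proof -
  interpret group G by fact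
  show ?thesis
    using strongly_graded_iff_set_mult_inv[OF assms(2,3)]
      strongly_graded_iff_idempotents_factor[OF assms(2,3)]
      strongly_graded_iff_inverse_semigroup_conditions[OF assms(2,3)]
    unfolding local_units_eq_idempotents by argo
qed

end
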